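(* Let $0<\gamma<1$, integers $n\ge p\ge2$, and $\beta_{\gamma,p}:=\min\left\{\frac{1-\gamma}{2p}\log\bigl(\frac{2p}{p+1}\bigr),\ \frac{1-\gamma}{8p^\gamma(p-1)^{1-\gamma}}\right\}$. Then $$\|C_\gamma^{(p)}\|_{1\to1}\le1+\frac{1}{\Gamma(\gamma)}H_{p-1}^{(1-\gamma)}+\frac{1}{\Gamma(\gamma)\,p^{1-\gamma}\,\beta_{\gamma,p}},$$ where $H_m^{(s)}:=\sum_{j=1}^m j^{-s}$. Moreover there is an absolute constant $K$ (independent of $n,p,\gamma$) with $\|C_\gamma^{(p)}\|_{1\to1}\le K\,\frac{p^\gamma}{\gamma(1-\gamma)}$.
   Context: $\log$ is the natural logarithm and $\Gamma$ the Gamma function. $(\tilde c_\gamma)_i:=(-1)^i\binom{\gamma}{i}$ with $\binom{\gamma}{i}=\prod_{j=1}^{i}\frac{\gamma+1-j}{j}$. $C_\gamma^{(p)}$ is the inverse of the $n\times n$ lower-triangular Toeplitz matrix whose $r$-th subdiagonal ($r=0$ the main diagonal) equals $(\tilde c_\gamma)_r$ for $r\le p-1$ and $0$ for $r\ge p$. For a matrix $M$, $\|M\|_{1\to1}$ is the maximum $\ell_1$ norm of a column of $M$. *)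

theory Defs
  imports "HOL-Analysis.Gamma_Function" "Jordan_Normal_Form.Matrix"
begin

text \<open>Coefficients (c~_gamma)_i = (-1)^i binom(gamma, i), with the generalized binomial
  coefficient binom(gamma,i) = prod_{j=1}^i (gamma+1-j)/j.\<close>
definition ctilde :: "real \<Rightarrow> nat \<Rightarrow> real" where
  "ctilde \<gamma> i = (-1) ^ i * (\<Prod>j = 1..i. (\<gamma> + 1 - real j) / real j)"

definition toep_band :: "real \<Rightarrow> nat \<Rightarrow> nat \<Rightarrow> real mat" where
  "toep_band \<gamma> p n = mat n n (\<lambda>(i, j). if j \<le> i \<and> i - j \<le> p - 1 then ctilde \<gamma> (i - j) else 0)"

definition C_mat :: "real \<Rightarrow> nat \<Rightarrow> nat \<Rightarrow> real mat" where
  "C_mat \<gamma> p n = (THE B. B \<in> carrier_mat n n \<and> toep_band \<gamma> p n * B = 1\<^sub>m n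
                         \<and> B * toep_band \<gamma> p n = 1\<^sub>m n)"

definition norm_1_1 :: "real mat \<Rightarrow> real" where
  "norm_1_1 M = Max ((\<lambda>j. \<Sum>i<dim_row M. \<bar>M $$ (i, j)\<bar>) ` {..<dim_col M})"

definition gen_harmonic :: "nat \<Rightarrow> real \<Rightarrow> real" where
  "gen_harmonic m s = (\<Sum>j = 1..m. real j powr (- s))"

definition beta_gp :: "real \<Rightarrow> nat \<Rightarrow> real" where
  "beta_gp \<gamma> p = min ((1 - \<gamma>) / (2 * real p) * ln (2 * real p / (real p + 1)))
                      ((1 - \<gamma>) / (8 * real p powr \<gamma> * (real p - 1) powr (1 - \<gamma>)))"

end

theory Submission
  imports Defs "HOL-Computational_Algebra.Formal_Power_Series"
begin

(*
  C is the lower triangular Toeplitz matrix of the coefficients d_k of 1 / c(x), where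
  c(x) = sum_{r<p} ctilde_r x^r. As ctilde_0 = 1 and ctilde_r < 0 for r >= 1, all d_k are
  nonnegative, so the largest column sum is the first one, D = sum_{k<n} d_k, and comparing
  the first n coefficients of c(x) * (1 / c(x)) = 1 gives c(1) * D <= 1. Finally
  c(1) = prod_{j=1}^{p-1} (1 - gamma / j) >= (1 - gamma) (p - 1)^(-gamma), so the norm is at most
  p^gamma / (1 - gamma); this is below both stated bounds because Gamma(gamma) <= 1 / gamma,
  gamma H_{p-1}^(1-gamma) >= p^gamma - 1 and beta_{gamma,p} <= (1 - gamma) / (2p).
*)

no_notation vec_index (infixl \<open>$\<close> 100)
unbundle no vec_syntax and fps_syntax

lemma powr_le_one_plus_mult:
  fixes a t :: real
  assumes "0 < a" "0 \<le> t" "t \<le> 1"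
  shows "a powr t \<le> 1 + t * (a - 1)"
  using Youngs_inequality_0[of t "1 - t" a 1] assms by (simp add: algebra_simps)

lemma Gamma_le_inverse:
  fixes x :: real
  assumes "0 < x" "x < 1"
  shows "Gamma x \<le> 1 / x"
proof -
  have "ln (Gamma ((1 - x) *\<^sub>R 1 + x *\<^sub>R 2)) \<le> (1 - x) * ln (Gamma 1) + x * ln (Gamma 2)"
    using convex_onD[OF log_convex_Gamma_real, of x 1 2] assms by simp
  moreover have "Gamma (2::real) = 1"
    using Gamma_fact[of 1] by simp
  ultimately have "Gamma (x + 1) \<le> 1"
    using assms by (simp add: algebra_simps)
  moreover have "Gamma (x + 1) = x * Gamma x"
    using assms by (intro Gamma_plus1) (auto elim!: nonpos_Ints_cases)
  ultimately show ?thesis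
    using assms by (simp add: field_simps)
qed

lemma gen_harmonic_lower:
  assumes "0 < \<gamma>" "\<gamma> < 1"
  shows "(real m + 1) powr \<gamma> - 1 \<le> \<gamma> * gen_harmonic m (1 - \<gamma>)"
proof (induction m)
  case (Suc m)
  have m: "0 < real m + 1" by simp
  have "((real m + 2) / (real m + 1)) powr \<gamma> \<le> 1 + \<gamma> / (real m + 1)"
    using powr_le_one_plus_mult[of "(real m + 2) / (real m + 1)" \<gamma>] m assms
    by (simp add: field_simps)
  then have "(real m + 2) powr \<gamma> \<le> (real m + 1) powr \<gamma> + \<gamma> * (real m + 1) powr (- (1 - \<gamma>))"
    using m by (simp add: powr_divide divide_le_eq powr_diff field_simps)
  then show ?case
    using Suc.IH by (simp add: gen_harmonic_def atLeastAtMostSuc_conv distrib_left add.commute)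
qed (simp add: gen_harmonic_def)

section \<open>Inverses of power series with nonpositive tail\<close>

lemma fps_inverse_nth_eq:
  fixes f :: "'a::field fps"
  assumes "f $ 0 = 1" "0 < k"
  shows "inverse f $ k = - (\<Sum>i=1..k. f $ i * inverse f $ (k - i))"
proof -
  have "0 = (f * inverse f) $ k"
    using assms by (simp add: inverse_mult_eq_1')
  also have "\<dots> = inverse f $ k + (\<Sum>i=1..k. f $ i * inverse f $ (k - i))"
    using assms by (simp add: fps_mult_nth sum.atLeast_Suc_atMost)
  finally show ?thesis
    by (simp add: eq_neg_iff_add_eq_0 add.commute)
qed

lemma fps_inverse_nth_nonneg:
  fixes f :: "'a::linordered_field fps"
  assumes "f $ 0 = 1" "\<And>i. 0 < i \<Longrightarrow> f $ i \<le> 0"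
  shows "0 \<le> inverse f $ k"
proof (induction k rule: less_induct)
  case (less k)
  show ?case
  proof (cases "k = 0")
    case False
    then have "inverse f $ k = (\<Sum>i=1..k. - (f $ i) * inverse f $ (k - i))"
      using assms(1) by (simp add: fps_inverse_nth_eq sum_negf)
    also have "\<dots> \<ge> 0"
      using assms(2) less False by (intro sum_nonneg mult_nonneg_nonneg) auto
    finally show ?thesis .
  qed (simp add: assms(1))
qed

lemma fps_mult_partial_sum:
  fixes f g :: "'a::semiring_0 fps"
  shows "(\<Sum>k<N. (f * g) $ k) = (\<Sum>i<N. f $ i * (\<Sum>j<N - i. g $ j))"
proof (induction N)
  case (Suc N)
  have "(\<Sum>i<Suc N. f $ i * (\<Sum>j<Suc N - i. g $ j))
      = (\<Sum>i\<le>N. f $ i * ((\<Sum>j<N - i. g $ j) + g $ (N - i)))"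
    unfolding lessThan_Suc_atMost by (intro sum.cong) (simp_all add: Suc_diff_le)
  also have "\<dots> = (\<Sum>i\<le>N. f $ i * (\<Sum>j<N - i. g $ j)) + (\<Sum>i\<le>N. f $ i * g $ (N - i))"
    by (simp add: distrib_left sum.distrib)
  also have "(\<Sum>i\<le>N. f $ i * (\<Sum>j<N - i. g $ j)) = (\<Sum>i<N. f $ i * (\<Sum>j<N - i. g $ j))"
    by (simp add: lessThan_Suc_atMost[symmetric])
  finally show ?case
    using Suc.IH by (simp add: fps_mult_nth atLeast0AtMost)
qed simp

lemma fps_inverse_partial_sum_le:
  fixes f :: "'a::linordered_field fps"
  assumes f0: "f $ 0 = 1" and f_nonpos: "\<And>i. 0 < i \<Longrightarrow> f $ i \<le> 0"
  shows "(\<Sum>i<N. f $ i) * (\<Sum>k<N. inverse f $ k) \<le> 1"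
proof (cases "N = 0")
  case False
  define D where "D M = (\<Sum>k<M. inverse f $ k)" for M
  have D_mono: "D M \<le> D N" if "M \<le> N" for M
    unfolding D_def using that fps_inverse_nth_nonneg[OF f0 f_nonpos]
    by (intro sum_mono2) auto
  have "(\<Sum>i<N. f $ i) * D N = (\<Sum>i<N. f $ i * D N)"
    by (simp add: sum_distrib_right)
  also have "\<dots> \<le> (\<Sum>i<N. f $ i * D (N - i))"
  proof (rule sum_mono)
    fix i assume "i \<in> {..<N}"
    show "f $ i * D N \<le> f $ i * D (N - i)"
      using f0 f_nonpos[of i] D_mono[of "N - i"] by (cases "i = 0") (auto intro: mult_left_mono_neg)
  qed
  also have "\<dots> = (\<Sum>k<N. (f * inverse f) $ k)"
    unfolding D_def fps_mult_partial_sum ..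
  also have "\<dots> = 1"
    using f0 False by (simp add: inverse_mult_eq_1')
  finally show ?thesis
    unfolding D_def .
qed simp

section \<open>Lower triangular Toeplitz matrices\<close>

definition lower_toeplitz_mat :: "nat \<Rightarrow> 'a::zero fps \<Rightarrow> 'a mat" where
  "lower_toeplitz_mat n f = mat n n (\<lambda>(i, j). if j \<le> i then f $ (i - j) else 0)"

lemma lower_toeplitz_mat_carrier: "lower_toeplitz_mat n f \<in> carrier_mat n n"
  by (simp add: lower_toeplitz_mat_def)

lemma lower_toeplitz_mat_mult:
  fixes f g :: "'a::semiring_1 fps"
  shows "lower_toeplitz_mat n f * lower_toeplitz_mat n g = lower_toeplitz_mat n (f * g)"
proof (rule eq_matI)
  fix i j assume "i < dim_row (lower_toeplitz_mat n (f * g))" "j < dim_col (lower_toeplitz_mat n (f * g))"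
  then have ij: "i < n" "j < n"
    by (simp_all add: lower_toeplitz_mat_def)
  have "(lower_toeplitz_mat n f * lower_toeplitz_mat n g) $$ (i, j)
      = (\<Sum>l<n. (if l \<le> i then f $ (i - l) else 0) * (if j \<le> l then g $ (l - j) else 0))"
    using ij by (simp add: lower_toeplitz_mat_def scalar_prod_def lessThan_atLeast0)
  also have "\<dots> = (if j \<le> i then (\<Sum>l=j..i. f $ (i - l) * g $ (l - j)) else 0)"
    using ij by (auto intro!: sum.mono_neutral_cong_right sum.neutral)
  also have "\<dots> = lower_toeplitz_mat n (f * g) $$ (i, j)"
  proof -
    have "(\<Sum>l=j..i. f $ (i - l) * g $ (l - j)) = (\<Sum>s=0..i - j. f $ s * g $ (i - j - s))"
      if "j \<le> i"
      using that by (intro sum.reindex_bij_witness[of _ "\<lambda>s. i - s" "\<lambda>l. i - l"]) auto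
    then show ?thesis
      using ij by (simp add: lower_toeplitz_mat_def fps_mult_nth)
  qed
  finally show "(lower_toeplitz_mat n f * lower_toeplitz_mat n g) $$ (i, j) = lower_toeplitz_mat n (f * g) $$ (i, j)" .
qed (simp_all add: lower_toeplitz_mat_def)

lemma lower_toeplitz_mat_1: "lower_toeplitz_mat n (1 :: 'a::{zero,one} fps) = 1\<^sub>m n"
  by (rule eq_matI) (auto simp: lower_toeplitz_mat_def)

lemma mat_inverse_unique:
  fixes A B B' :: "'a::semiring_1 mat"
  assumes "A \<in> carrier_mat n n" "B \<in> carrier_mat n n" "B' \<in> carrier_mat n n"
    and "B * A = 1\<^sub>m n" "A * B' = 1\<^sub>m n"
  shows "B' = B"
proof -
  have "B' = (B * A) * B'"
    unfolding assms(4) using assms(3) by simp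
  also have "\<dots> = B * (A * B')"
    using assms(2,1,3) by (rule assoc_mult_mat)
  also have "\<dots> = B"
    unfolding assms(5) using assms(2) by simp
  finally show ?thesis .
qed

lemma lower_toeplitz_mat_inverse:
  fixes f :: "'a::field fps"
  assumes "f $ 0 \<noteq> 0"
  shows "lower_toeplitz_mat n f * lower_toeplitz_mat n (inverse f) = 1\<^sub>m n"
    and "lower_toeplitz_mat n (inverse f) * lower_toeplitz_mat n f = 1\<^sub>m n"
  using assms by (simp_all add: lower_toeplitz_mat_mult lower_toeplitz_mat_1 inverse_mult_eq_1 inverse_mult_eq_1')

lemma norm_1_1_lower_toeplitz_mat:
  fixes f :: "real fps"
  assumes "0 < n" "\<And>k. 0 \<le> f $ k"
  shows "norm_1_1 (lower_toeplitz_mat n f) = (\<Sum>k<n. f $ k)"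
proof -
  have column: "(\<Sum>i<n. \<bar>lower_toeplitz_mat n f $$ (i, j)\<bar>) = (\<Sum>k<n - j. f $ k)" if "j < n" for j
  proof -
    have "(\<Sum>i<n. \<bar>lower_toeplitz_mat n f $$ (i, j)\<bar>) = (\<Sum>i\<in>{j..<n}. f $ (i - j))"
      using that assms(2) by (auto simp: lower_toeplitz_mat_def intro!: sum.mono_neutral_cong_right)
    also have "\<dots> = (\<Sum>k<n - j. f $ k)"
      by (rule sum.reindex_bij_witness[of _ "\<lambda>k. k + j" "\<lambda>i. i - j"]) auto
    finally show ?thesis .
  qed
  have "norm_1_1 (lower_toeplitz_mat n f) = Max ((\<lambda>j. \<Sum>k<n - j. f $ k) ` {..<n})"
    unfolding norm_1_1_def using column by (simp add: lower_toeplitz_mat_def)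
  also have "\<dots> = (\<Sum>k<n. f $ k)"
    using assms by (intro Max_eqI) (auto intro!: sum_mono2 image_eqI[of _ _ 0])
  finally show ?thesis .
qed

definition prod_one_minus :: "real \<Rightarrow> nat \<Rightarrow> real" where
  "prod_one_minus \<gamma> m = (\<Prod>j = 1..m. 1 - \<gamma> / real j)"

lemma prod_one_minus_0 [simp]: "prod_one_minus \<gamma> 0 = 1"
  by (simp add: prod_one_minus_def)

lemma prod_one_minus_Suc: "prod_one_minus \<gamma> (Suc m) = prod_one_minus \<gamma> m * (1 - \<gamma> / (real m + 1))"
  by (simp add: prod_one_minus_def atLeastAtMostSuc_conv add.commute)

lemma prod_one_minus_pos: "\<gamma> < 1 \<Longrightarrow> 0 < prod_one_minus \<gamma> m"
  unfolding prod_one_minus_def by (intro prod_pos) (auto simp: field_simps)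

lemma ctilde_0 [simp]: "ctilde \<gamma> 0 = 1"
  by (simp add: ctilde_def)

lemma ctilde_Suc_ratio: "ctilde \<gamma> (Suc r) = ctilde \<gamma> r * ((real r - \<gamma>) / (real r + 1))"
  by (simp add: ctilde_def atLeastAtMostSuc_conv field_simps)

lemma ctilde_Suc: "ctilde \<gamma> (Suc m) = - \<gamma> / (real m + 1) * prod_one_minus \<gamma> m"
proof (induction m)
  case (Suc m)
  show ?case
    unfolding ctilde_Suc_ratio[of \<gamma> "Suc m"] Suc.IH prod_one_minus_Suc
    by (simp add: field_simps)
qed (simp add: ctilde_def)

lemma ctilde_neg: "0 < \<gamma> \<Longrightarrow> \<gamma> < 1 \<Longrightarrow> 0 < r \<Longrightarrow> ctilde \<gamma> r < 0"
  using prod_one_minus_pos[of \<gamma> "r - 1"] ctilde_Suc[of \<gamma> "r - 1"]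
  by (simp add: mult_neg_pos)

lemma sum_ctilde_atMost: "(\<Sum>r\<le>m. ctilde \<gamma> r) = prod_one_minus \<gamma> m"
  by (induction m) (simp_all add: ctilde_Suc prod_one_minus_Suc field_simps)

lemma prod_one_minus_lower:
  assumes "0 < \<gamma>" "\<gamma> < 1" "1 \<le> m"
  shows "1 - \<gamma> \<le> prod_one_minus \<gamma> m * real m powr \<gamma>"
  using assms(3)
proof (induction m rule: dec_induct)
  case (step m)
  have m: "0 < real m" using step.hyps by simp
  have "(real m / (real m + 1)) powr \<gamma> \<le> 1 - \<gamma> / (real m + 1)"
    using powr_le_one_plus_mult[of "real m / (real m + 1)" \<gamma>] m assms
    by (simp add: field_simps)
  then have "real m powr \<gamma> \<le> (1 - \<gamma> / (real m + 1)) * (real m + 1) powr \<gamma>"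
    using m by (simp add: powr_divide divide_le_eq)
  then have "prod_one_minus \<gamma> m * real m powr \<gamma> \<le> prod_one_minus \<gamma> (Suc m) * real (Suc m) powr \<gamma>"
    using prod_one_minus_pos[of \<gamma> m] assms
    by (simp add: prod_one_minus_Suc mult.assoc add.commute mult_left_mono)
  with step.IH show ?case by linarith
qed (simp add: prod_one_minus_def)

definition ctilde_trunc_fps :: "real \<Rightarrow> nat \<Rightarrow> real fps" where
  "ctilde_trunc_fps \<gamma> p = Abs_fps (\<lambda>r. if r \<le> p - 1 then ctilde \<gamma> r else 0)"

lemma C_mat_eq_lower_toeplitz_mat:
  "C_mat \<gamma> p n = lower_toeplitz_mat n (inverse (ctilde_trunc_fps \<gamma> p))"
proof -
  let ?T = "lower_toeplitz_mat n (ctilde_trunc_fps \<gamma> p)"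
  let ?B = "lower_toeplitz_mat n (inverse (ctilde_trunc_fps \<gamma> p))"
  have T: "toep_band \<gamma> p n = ?T"
    by (rule eq_matI) (auto simp: toep_band_def lower_toeplitz_mat_def ctilde_trunc_fps_def)
  have f0: "ctilde_trunc_fps \<gamma> p $ 0 \<noteq> 0"
    by (simp add: ctilde_trunc_fps_def)
  have inv: "?T * ?B = 1\<^sub>m n" "?B * ?T = 1\<^sub>m n"
    using lower_toeplitz_mat_inverse[OF f0] by blast+
  show ?thesis
    unfolding C_mat_def T
  proof (rule the_equality)
    fix B' assume "B' \<in> carrier_mat n n \<and> ?T * B' = 1\<^sub>m n \<and> B' * ?T = 1\<^sub>m n"
    then show "B' = ?B"
      using mat_inverse_unique[OF lower_toeplitz_mat_carrier lower_toeplitz_mat_carrier _ inv(2)] by blast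
  qed (use inv lower_toeplitz_mat_carrier in blast)
qed

lemma norm_1_1_C_mat_le:
  assumes "0 < \<gamma>" "\<gamma> < 1" "1 \<le> p" "p \<le> n"
  shows "norm_1_1 (C_mat \<gamma> p n) \<le> 1 / prod_one_minus \<gamma> (p - 1)"
proof -
  let ?f = "ctilde_trunc_fps \<gamma> p"
  have f0: "?f $ 0 = 1"
    by (simp add: ctilde_trunc_fps_def)
  have f_nonpos: "?f $ i \<le> 0" if "0 < i" for i
    using ctilde_neg[OF assms(1,2) that] by (simp add: ctilde_trunc_fps_def)
  have "(\<Sum>i<n. ?f $ i) = (\<Sum>r\<le>p - 1. ctilde \<gamma> r)"
    using assms(3,4) unfolding ctilde_trunc_fps_def fps_nth_Abs_fps
    by (intro sum.mono_neutral_cong_right) auto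
  then have sum_f: "(\<Sum>i<n. ?f $ i) = prod_one_minus \<gamma> (p - 1)"
    by (simp only: sum_ctilde_atMost)
  have "(\<Sum>i<n. ?f $ i) * (\<Sum>k<n. inverse ?f $ k) \<le> 1"
    by (rule fps_inverse_partial_sum_le[OF f0 f_nonpos])
  then have "(\<Sum>k<n. inverse ?f $ k) \<le> 1 / prod_one_minus \<gamma> (p - 1)"
    unfolding sum_f using prod_one_minus_pos[OF assms(2), of "p - 1"]
    by (simp add: le_divide_eq mult.commute)
  moreover have "norm_1_1 (C_mat \<gamma> p n) = (\<Sum>k<n. inverse ?f $ k)"
    unfolding C_mat_eq_lower_toeplitz_mat
    using assms(3,4) fps_inverse_nth_nonneg[OF f0 f_nonpos]
    by (intro norm_1_1_lower_toeplitz_mat) auto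
  ultimately show ?thesis
    by simp
qed

lemma norm_1_1_C_mat_le_powr:
  assumes "0 < \<gamma>" "\<gamma> < 1" "2 \<le> p" "p \<le> n"
  shows "norm_1_1 (C_mat \<gamma> p n) \<le> real p powr \<gamma> / (1 - \<gamma>)"
proof -
  let ?P = "prod_one_minus \<gamma> (p - 1)"
  have "1 - \<gamma> \<le> ?P * real (p - 1) powr \<gamma>"
    using assms by (intro prod_one_minus_lower) auto
  then have "(1 - \<gamma>) / ?P \<le> real (p - 1) powr \<gamma>"
    using prod_one_minus_pos[OF assms(2)] by (simp add: pos_divide_le_eq mult.commute)
  then have "(1 - \<gamma>) / ?P / (1 - \<gamma>) \<le> real (p - 1) powr \<gamma> / (1 - \<gamma>)"
    using assms(2) by (intro divide_right_mono) auto
  then have "1 / ?P \<le> real (p - 1) powr \<gamma> / (1 - \<gamma>)"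
    using assms(2) by simp
  also have "\<dots> \<le> real p powr \<gamma> / (1 - \<gamma>)"
    using assms by (intro divide_right_mono powr_mono2) auto
  finally have "1 / ?P \<le> real p powr \<gamma> / (1 - \<gamma>)" .
  moreover have "norm_1_1 (C_mat \<gamma> p n) \<le> 1 / ?P"
    using assms by (intro norm_1_1_C_mat_le) auto
  ultimately show ?thesis
    by linarith
qed

lemma beta_gp_pos: "0 < \<gamma> \<Longrightarrow> \<gamma> < 1 \<Longrightarrow> 2 \<le> p \<Longrightarrow> 0 < beta_gp \<gamma> p"
  by (simp add: beta_gp_def)

lemma beta_gp_le:
  assumes "\<gamma> \<le> 1" "0 < p"
  shows "beta_gp \<gamma> p \<le> (1 - \<gamma>) / (2 * real p)"
proof -
  have "ln (2 * real p / (real p + 1)) \<le> 2 * real p / (real p + 1) - 1"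
    using assms by (intro ln_le_minus_one) auto
  also have "\<dots> \<le> 1"
    by (simp add: field_simps)
  finally have "(1 - \<gamma>) / (2 * real p) * ln (2 * real p / (real p + 1)) \<le> (1 - \<gamma>) / (2 * real p)"
    by (rule mult_left_le) (use assms in auto)
  then show ?thesis
    unfolding beta_gp_def by linarith
qed

lemma powr_div_one_minus_le_harmonic_Gamma_bound:
  assumes "0 < \<gamma>" "\<gamma> < 1" "2 \<le> p"
  shows "real p powr \<gamma> / (1 - \<gamma>) \<le> 1 + gen_harmonic (p - 1) (1 - \<gamma>) / Gamma \<gamma>
           + 1 / (Gamma \<gamma> * real p powr (1 - \<gamma>) * beta_gp \<gamma> p)"
proof -
  define q where "q = real p powr \<gamma>"
  define X where "X = real p powr (1 - \<gamma>)"
  define H where "H = gen_harmonic (p - 1) (1 - \<gamma>)"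
  have p: "0 < real p" and q: "0 < q" and X: "0 < X"
    using assms by (simp_all add: q_def X_def)
  have Xq: "X * q = real p"
    using p by (simp add: X_def q_def powr_add[symmetric])
  have Gamma: "0 < Gamma \<gamma>" "Gamma \<gamma> \<le> 1 / \<gamma>"
    using assms Gamma_le_inverse by simp_all
  have "q - 1 \<le> \<gamma> * H"
    using gen_harmonic_lower[OF assms(1,2), of "p - 1"] assms by (simp add: q_def H_def of_nat_diff)
  also have "\<gamma> * H \<le> H / Gamma \<gamma>"
  proof -
    have "\<gamma> * Gamma \<gamma> \<le> 1"
      using Gamma assms(1) by (simp add: field_simps)
    moreover have "0 \<le> H"
      by (simp add: H_def gen_harmonic_def sum_nonneg)
    ultimately have "(\<gamma> * Gamma \<gamma>) * H \<le> H"
      using Gamma assms(1) by (intro mult_left_le_one_le) simp_all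
    then show ?thesis
      using Gamma by (simp add: pos_le_divide_eq mult_ac)
  qed
  finally have harmonic_term: "q - 1 \<le> H / Gamma \<gamma>" .
  have "Gamma \<gamma> * X * beta_gp \<gamma> p \<le> 1 / \<gamma> * X * ((1 - \<gamma>) / (2 * real p))"
    using Gamma X beta_gp_pos[OF assms] beta_gp_le[of \<gamma> p] assms
    by (intro mult_mono) simp_all
  also have "\<dots> = (1 - \<gamma>) / (2 * \<gamma> * q)"
    unfolding Xq[symmetric] using assms X q by (simp add: field_simps)
  finally have denominator: "Gamma \<gamma> * X * beta_gp \<gamma> p \<le> (1 - \<gamma>) / (2 * \<gamma> * q)" .
  have "\<gamma> * q / (1 - \<gamma>) \<le> 1 / ((1 - \<gamma>) / (2 * \<gamma> * q))"
    using assms q by (simp add: field_simps)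
  also have "\<dots> \<le> 1 / (Gamma \<gamma> * X * beta_gp \<gamma> p)"
    using denominator Gamma X q beta_gp_pos[OF assms] assms(1,2)
    by (intro divide_left_mono) simp_all
  finally have beta_term: "\<gamma> * q / (1 - \<gamma>) \<le> 1 / (Gamma \<gamma> * X * beta_gp \<gamma> p)" .
  have "q / (1 - \<gamma>) = 1 + (q - 1) + \<gamma> * q / (1 - \<gamma>)"
    using assms by (simp add: field_simps)
  with harmonic_term beta_term show ?thesis
    unfolding q_def X_def H_def by linarith
qed

theorem mainTheorem9:
  shows "(\<forall>(\<gamma>::real) (n::nat) (p::nat). 0 < \<gamma> \<and> \<gamma> < 1 \<and> 2 \<le> p \<and> p \<le> n \<longrightarrow>
           norm_1_1 (C_mat \<gamma> p n) \<le> 1 + gen_harmonic (p - 1) (1 - \<gamma>) / Gamma \<gamma>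
              + 1 / (Gamma \<gamma> * real p powr (1 - \<gamma>) * beta_gp \<gamma> p))
       \<and> (\<exists>K::real. \<forall>(\<gamma>::real) (n::nat) (p::nat). 0 < \<gamma> \<and> \<gamma> < 1 \<and> 2 \<le> p \<and> p \<le> n \<longrightarrow>
           norm_1_1 (C_mat \<gamma> p n) \<le> K * real p powr \<gamma> / (\<gamma> * (1 - \<gamma>)))"
proof (intro conjI exI[of _ 1] allI impI; elim conjE)
  fix \<gamma> :: real and n p :: nat
  assume assms: "0 < \<gamma>" "\<gamma> < 1" "2 \<le> p" "p \<le> n"
  show "norm_1_1 (C_mat \<gamma> p n) \<le> 1 + gen_harmonic (p - 1) (1 - \<gamma>) / Gamma \<gamma>
          + 1 / (Gamma \<gamma> * real p powr (1 - \<gamma>) * beta_gp \<gamma> p)"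
    using norm_1_1_C_mat_le_powr[OF assms] powr_div_one_minus_le_harmonic_Gamma_bound[OF assms(1-3)]
    by linarith
next
  fix \<gamma> :: real and n p :: nat
  assume assms: "0 < \<gamma>" "\<gamma> < 1" "2 \<le> p" "p \<le> n"
  have "real p powr \<gamma> / (1 - \<gamma>) \<le> real p powr \<gamma> / (\<gamma> * (1 - \<gamma>))"
    using assms by (intro divide_left_mono) (auto simp: mult_le_cancel_right1)
  with norm_1_1_C_mat_le_powr[OF assms]
  show "norm_1_1 (C_mat \<gamma> p n) \<le> 1 * real p powr \<gamma> / (\<gamma> * (1 - \<gamma>))"
    by simp
qed

end
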